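(* Let $X\subset\mathbb{R}^n$ be a closed unbounded subset which is Lipschitz regular at infinity. Then there exists a compact set $K\subset\mathbb{R}^n$ such that each connected component of $X\setminus K$ is Lipschitz normally embedded.
   Context: All subsets carry the Euclidean induced metric. A map is bi-Lipschitz if it is Lipschitz (i.e. $\|f(x_1)-f(x_2)\|\le\lambda\|x_1-x_2\|$ for some $\lambda>0$) with Lipschitz inverse. $X\subset\mathbb{R}^n$ is Lipschitz regular at infinity if there exist compact sets $K_1\subset\mathbb{R}^k$, $K_2\subset\mathbb{R}^n$ (some $k\in\mathbb{N}$) and a bi-Lipschitz homeomorphism $\mathbb{R}^k\setminus K_1\to X\setminus K_2$. For a path connected $Z\subset\mathbb{R}^n$, the inner distance $d_Z(x_1,x_2)$ is the infimum of the lengths of paths in $Z$ joining $x_1$ to $x_2$. A set $Z\subset\mathbb{R}^n$ is Lipschitz normally embedded if there is $\lambda>0$ with $d_Z(x_1,x_2)\le\lambda\|x_1-x_2\|$ for all $x_1,x_2\in Z$. *)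

theory Defs
  imports "HOL-Analysis.Analysis"
begin

text \<open>Euclidean distance on the model of R^k used by the library topology
  Euclidean_space k, whose carrier is the set of x :: nat => real with x i = 0 for i >= k.\<close>
definition eucl_dist :: "nat \<Rightarrow> (nat \<Rightarrow> real) \<Rightarrow> (nat \<Rightarrow> real) \<Rightarrow> real" where
  "eucl_dist k x y = L2_set (\<lambda>i. x i - y i) {..<k}"

definition lipschitz_regular_at_infinity :: "'a::euclidean_space set \<Rightarrow> bool" where
  "lipschitz_regular_at_infinity X \<longleftrightarrow>
    (\<exists>k K1 K2 f g L1 L2.
       compactin (Euclidean_space k) K1 \<and> compact K2 \<and> L1 > 0 \<and> L2 > 0 \<and>
       f ` (topspace (Euclidean_space k) - K1) = X - K2 \<and>
       g ` (X - K2) = topspace (Euclidean_space k) - K1 \<and>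
       (\<forall>x\<in>topspace (Euclidean_space k) - K1. g (f x) = x) \<and>
       (\<forall>y\<in>X - K2. f (g y) = y) \<and>
       (\<forall>x\<in>topspace (Euclidean_space k) - K1. \<forall>x'\<in>topspace (Euclidean_space k) - K1.
          dist (f x) (f x') \<le> L1 * eucl_dist k x x') \<and>
       (\<forall>y\<in>X - K2. \<forall>y'\<in>X - K2. eucl_dist k (g y) (g y') \<le> L2 * dist y y'))"

definition path_length :: "(real \<Rightarrow> 'a::real_normed_vector) \<Rightarrow> ereal" where
  "path_length \<gamma> =
    (SUP (m, t) \<in> {(m, t). t 0 = (0::real) \<and> t m = 1 \<and> (\<forall>i<m. t i \<le> t (Suc i))}.
       ereal (\<Sum>i<m. dist (\<gamma> (t (Suc i))) (\<gamma> (t i))))"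

definition inner_dist :: "'a::real_normed_vector set \<Rightarrow> 'a \<Rightarrow> 'a \<Rightarrow> ereal" where
  "inner_dist Z x y =
    (INF \<gamma> \<in> {\<gamma>. path \<gamma> \<and> path_image \<gamma> \<subseteq> Z \<and> pathstart \<gamma> = x \<and> pathfinish \<gamma> = y}.
       path_length \<gamma>)"

definition LNE :: "'a::real_normed_vector set \<Rightarrow> bool" where
  "LNE Z \<longleftrightarrow> (\<exists>c>0. \<forall>x1\<in>Z. \<forall>x2\<in>Z. inner_dist Z x1 x2 \<le> ereal (c * norm (x1 - x2)))"

end

theory Submission
  imports Defs
begin

text \<open>Pull everything back to the model of R^k through the bi-Lipschitz chart. Outside a box
  [-R,R]^k containing K1, two points x, y of R^k can be joined by a polygonal path of at most three
  segments, each staying beyond one face of the box and of length at most 2|x - y|: the only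
  exception is k = 1 with x and y on opposite sides of the box. Its image under the chart is a path
  of length at most a constant times |f x - f y|, hence a path inside the component. The exceptional
  case cannot occur within one component, because a component is connected and the first coordinate
  of the inverse chart is continuous and never vanishes on it. The compact set removed from X is the
  closure of K2 together with the image of the box.\<close>

lemma path_length_le_lipschitz:
  assumes "M-lipschitz_on {0..1} \<gamma>"
  shows "path_length \<gamma> \<le> ereal M"
  unfolding path_length_def
proof (rule SUP_least, clarify)
  fix m and t :: "nat \<Rightarrow> real"
  assume t0: "t 0 = 0" and tm: "t m = 1" and mono: "\<forall>i<m. t i \<le> t (Suc i)"
  have t_mono: "t i \<le> t j" if "i \<le> j" "j \<le> m" for i j
    by (rule lift_Suc_mono_le_ivl[of "{..<m}" t]) (use mono that in auto)
  have t_in: "t i \<in> {0..1}" if "i \<le> m" for i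
    using t_mono[of 0 i] t_mono[of i m] that t0 tm by auto
  have "(\<Sum>i<m. dist (\<gamma> (t (Suc i))) (\<gamma> (t i))) \<le> (\<Sum>i<m. M * (t (Suc i) - t i))"
  proof (rule sum_mono)
    fix i assume "i \<in> {..<m}"
    then show "dist (\<gamma> (t (Suc i))) (\<gamma> (t i)) \<le> M * (t (Suc i) - t i)"
      using lipschitz_onD[OF assms t_in t_in, of "Suc i" i] mono by (simp add: dist_real_def)
  qed
  also have "\<dots> = M * (\<Sum>i<m. t (Suc i) - t i)"
    by (simp add: sum_distrib_left)
  also have "\<dots> = M"
    by (simp add: sum_lessThan_telescope t0 tm)
  finally show "ereal (\<Sum>i<m. dist (\<gamma> (t (Suc i))) (\<gamma> (t i))) \<le> ereal M"
    by simp
qed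

lemma inner_dist_le_lipschitz_path:
  assumes "M-lipschitz_on {0..1::real} \<gamma>" and "\<gamma> ` {0..1} \<subseteq> Z"
  shows "inner_dist Z (\<gamma> 0) (\<gamma> 1) \<le> ereal M"
proof -
  have "path \<gamma>"
    unfolding path_def using assms(1) by (rule lipschitz_on_continuous_on)
  then have "\<gamma> \<in> {\<gamma>'. path \<gamma>' \<and> path_image \<gamma>' \<subseteq> Z \<and>
      pathstart \<gamma>' = \<gamma> 0 \<and> pathfinish \<gamma>' = \<gamma> 1}"
    using assms(2) by (simp add: path_image_def pathstart_def pathfinish_def)
  then show ?thesis
    unfolding inner_dist_def by (rule INF_lower2) (rule path_length_le_lipschitz[OF assms(1)])
qed

text \<open>The library's linepath needs a real_vector instance, which nat \<Rightarrow> real lacks.\<close>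
definition coord_linepath :: "(nat \<Rightarrow> real) \<Rightarrow> (nat \<Rightarrow> real) \<Rightarrow> real \<Rightarrow> nat \<Rightarrow> real" where
  "coord_linepath u v s = (\<lambda>i. u i + s * (v i - u i))"

lemma coord_linepath_0 [simp]: "coord_linepath u v 0 = u"
  and coord_linepath_1 [simp]: "coord_linepath u v 1 = v"
  by (auto simp: coord_linepath_def)

lemma eucl_dist_self [simp]: "eucl_dist k u u = 0"
  by (simp add: eucl_dist_def L2_set_def)

lemma eucl_dist_nonneg: "0 \<le> eucl_dist k u v"
  by (simp add: eucl_dist_def)

lemma eucl_dist_commute: "eucl_dist k u v = eucl_dist k v u"
  unfolding eucl_dist_def L2_set_def by (simp add: power2_commute)

lemma abs_coord_diff_le_eucl_dist: "i < k \<Longrightarrow> \<bar>u i - v i\<bar> \<le> eucl_dist k u v"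
  unfolding eucl_dist_def using member_le_L2_set[of "{..<k}" i "\<lambda>i. \<bar>u i - v i\<bar>"]
  by (simp add: L2_set_def)

lemma eucl_dist_mono:
  "(\<And>i. i < k \<Longrightarrow> \<bar>u i - v i\<bar> \<le> \<bar>x i - y i\<bar>) \<Longrightarrow> eucl_dist k u v \<le> eucl_dist k x y"
  using L2_set_mono[of "{..<k}" "\<lambda>i. \<bar>u i - v i\<bar>" "\<lambda>i. \<bar>x i - y i\<bar>"]
  by (simp add: eucl_dist_def L2_set_def)

lemma eucl_dist_fun_upd_le: "eucl_dist k u (u(j := t)) \<le> \<bar>u j - t\<bar>"
proof -
  have "eucl_dist k u (u(j := t)) \<le> (\<Sum>i<k. \<bar>u i - (u(j := t)) i\<bar>)"
    unfolding eucl_dist_def by (rule L2_set_le_sum_abs)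
  also have "\<dots> = (\<Sum>i<k. if i = j then \<bar>u j - t\<bar> else 0)"
    by (rule sum.cong) auto
  also have "\<dots> \<le> \<bar>u j - t\<bar>" by simp
  finally show ?thesis .
qed

lemma eucl_dist_coord_linepath:
  "eucl_dist k (coord_linepath u v s) (coord_linepath u v t) = \<bar>s - t\<bar> * eucl_dist k u v"
proof -
  have "(\<lambda>i. coord_linepath u v s i - coord_linepath u v t i) = (\<lambda>i. (s - t) * (v i - u i))"
    by (simp add: coord_linepath_def algebra_simps)
  then show ?thesis
    unfolding eucl_dist_def
    by (simp only:) (simp add: L2_set_def power_mult_distrib real_sqrt_mult power2_commute flip: sum_distrib_left)
qed

definition box_exterior :: "nat \<Rightarrow> real \<Rightarrow> (nat \<Rightarrow> real) set" where
  "box_exterior k R = {z \<in> topspace (Euclidean_space k). \<exists>i<k. R < \<bar>z i\<bar>}"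

definition coord_box :: "nat \<Rightarrow> real \<Rightarrow> (nat \<Rightarrow> real) set" where
  "coord_box k R = {z \<in> topspace (Euclidean_space k). \<forall>i<k. \<bar>z i\<bar> \<le> R}"

lemma topspace_diff_box_exterior: "topspace (Euclidean_space k) - box_exterior k R = coord_box k R"
  by (auto simp: box_exterior_def coord_box_def not_less[symmetric])

definition beyond_same_face :: "nat \<Rightarrow> real \<Rightarrow> (nat \<Rightarrow> real) \<Rightarrow> (nat \<Rightarrow> real) \<Rightarrow> bool" where
  "beyond_same_face k R u v \<longleftrightarrow> (\<exists>i<k. (R < u i \<and> R < v i) \<or> (u i < -R \<and> v i < -R))"

lemma beyond_same_face_refl: "u \<in> box_exterior k R \<Longrightarrow> beyond_same_face k R u u"
  by (auto simp: box_exterior_def beyond_same_face_def abs_less_iff)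

lemma beyond_same_face_of_coord:
  "i < k \<Longrightarrow> R < \<bar>u i\<bar> \<Longrightarrow> v i = u i \<Longrightarrow> beyond_same_face k R u v"
  by (auto simp: beyond_same_face_def abs_less_iff)

lemma beyond_same_face_commute: "beyond_same_face k R u v \<longleftrightarrow> beyond_same_face k R v u"
  by (auto simp: beyond_same_face_def)

lemma coord_linepath_in_box_exterior:
  assumes "u \<in> topspace (Euclidean_space k)" "v \<in> topspace (Euclidean_space k)"
    and "beyond_same_face k R u v" and "s \<in> {0..1}"
  shows "coord_linepath u v s \<in> box_exterior k R"
proof -
  obtain i where i: "i < k" "(R < u i \<and> R < v i) \<or> (u i < -R \<and> v i < -R)"
    using assms(3) unfolding beyond_same_face_def by blast
  have convex: "coord_linepath u v s i = (1 - s) * u i + s * v i"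
    by (simp add: coord_linepath_def algebra_simps)
  have "R < \<bar>coord_linepath u v s i\<bar>"
    using i(2) assms(4) convex_bound_lt[of "u i" "-R" "v i" "1 - s" s]
      convex_bound_lt[of "-u i" "-R" "-v i" "1 - s" s]
    unfolding convex by auto
  then show ?thesis
    using assms(1,2) i(1)
    by (auto simp: box_exterior_def topspace_Euclidean_space coord_linepath_def)
qed

definition box_exterior_polygon :: "nat \<Rightarrow> real \<Rightarrow> real \<Rightarrow>
    (nat \<Rightarrow> real) \<Rightarrow> (nat \<Rightarrow> real) \<Rightarrow> (nat \<Rightarrow> real) \<Rightarrow> (nat \<Rightarrow> real) \<Rightarrow> bool"
  where "box_exterior_polygon k R d x x' y' y \<longleftrightarrow>
    {x, x', y', y} \<subseteq> topspace (Euclidean_space k) \<and>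
    beyond_same_face k R x x' \<and> beyond_same_face k R x' y' \<and> beyond_same_face k R y' y \<and>
    eucl_dist k x x' \<le> d \<and> eucl_dist k x' y' \<le> d \<and> eucl_dist k y' y \<le> d"

lemma box_exterior_polygon_mono:
  "box_exterior_polygon k R d x x' y' y \<Longrightarrow> d \<le> d' \<Longrightarrow>
    box_exterior_polygon k R d' x x' y' y"
  unfolding box_exterior_polygon_def by linarith

lemma box_exterior_polygon_same_face:
  assumes "x \<in> box_exterior k R" "y \<in> box_exterior k R" "beyond_same_face k R x y"
  shows "box_exterior_polygon k R (eucl_dist k x y) x x y y"
  using assms eucl_dist_nonneg[of k x y] beyond_same_face_refl[OF assms(1)]
    beyond_same_face_refl[OF assms(2)]
  by (auto simp: box_exterior_polygon_def box_exterior_def)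

lemma box_exterior_polygon_distinct_faces:
  assumes "x \<in> box_exterior k R" "y \<in> box_exterior k R"
    and "i < k" "j < k" "i \<noteq> j" "R < \<bar>x i\<bar>" "R < \<bar>y j\<bar>"
  shows "box_exterior_polygon k R (eucl_dist k x y) x (x(j := y j)) y y"
proof -
  have "eucl_dist k x (x(j := y j)) \<le> eucl_dist k x y"
    using eucl_dist_fun_upd_le[of k x j "y j"] abs_coord_diff_le_eucl_dist[OF \<open>j < k\<close>, of x y]
    by linarith
  moreover have "eucl_dist k (x(j := y j)) y \<le> eucl_dist k x y"
    by (rule eucl_dist_mono) simp
  moreover have "beyond_same_face k R x (x(j := y j))" "beyond_same_face k R (x(j := y j)) y"
    using assms(3-) by (auto intro: beyond_same_face_of_coord)
  ultimately show ?thesis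
    using assms(1,2) eucl_dist_nonneg[of k x y] beyond_same_face_refl[OF assms(2)] \<open>j < k\<close>
    by (auto simp: box_exterior_polygon_def box_exterior_def topspace_Euclidean_space)
qed

text \<open>Here x and y lie beyond opposite faces along coordinate i; the detour passes over the
  box by moving coordinate l to 2R.\<close>
lemma box_exterior_polygon_opposite_faces:
  assumes "x \<in> box_exterior k R" "y \<in> box_exterior k R" "0 < R"
    and "i < k" "R < \<bar>x i\<bar>" "R < \<bar>y i\<bar>" "2 * R < eucl_dist k x y"
    and "l < k" "l \<noteq> i" "\<bar>x l\<bar> \<le> R" "\<bar>y l\<bar> \<le> R"
  shows "box_exterior_polygon k R (2 * eucl_dist k x y) x (x(l := 2 * R)) (y(l := 2 * R)) y"
proof -
  have "eucl_dist k x (x(l := 2 * R)) \<le> 2 * eucl_dist k x y"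
    "eucl_dist k (y(l := 2 * R)) y \<le> 2 * eucl_dist k x y"
    using eucl_dist_fun_upd_le[of k x l "2 * R"] eucl_dist_fun_upd_le[of k y l "2 * R"]
      eucl_dist_commute[of k "y(l := 2 * R)" y] assms(7,10,11) by linarith+
  moreover have "eucl_dist k (x(l := 2 * R)) (y(l := 2 * R)) \<le> 2 * eucl_dist k x y"
    using eucl_dist_mono[of k "x(l := 2 * R)" "y(l := 2 * R)" x y] eucl_dist_nonneg[of k x y]
    by force
  moreover have "beyond_same_face k R x (x(l := 2 * R))" "beyond_same_face k R y (y(l := 2 * R))"
    using assms(4-6,9) by (auto intro: beyond_same_face_of_coord)
  moreover have "beyond_same_face k R (x(l := 2 * R)) (y(l := 2 * R))"
    using assms(3,8) by (auto simp: beyond_same_face_def)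
  ultimately show ?thesis
    using assms(1,2,8)
    by (auto simp: box_exterior_polygon_def box_exterior_def topspace_Euclidean_space
        beyond_same_face_commute)
qed

lemma box_exterior_single_large_coord:
  assumes x: "x \<in> box_exterior k R" and y: "y \<in> box_exterior k R"
    and "\<not> (\<exists>i j. i < k \<and> j < k \<and> i \<noteq> j \<and> R < \<bar>x i\<bar> \<and> R < \<bar>y j\<bar>)"
  obtains i where "i < k" "R < \<bar>x i\<bar>" "R < \<bar>y i\<bar>"
    "\<And>l. l < k \<Longrightarrow> l \<noteq> i \<Longrightarrow> \<bar>x l\<bar> \<le> R \<and> \<bar>y l\<bar> \<le> R"
proof -
  obtain i where i: "i < k" "R < \<bar>x i\<bar>"
    using x by (auto simp: box_exterior_def)
  obtain j where "j < k" "R < \<bar>y j\<bar>"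
    using y by (auto simp: box_exterior_def)
  with assms(3) i have "R < \<bar>y i\<bar>"
    by (cases "i = j") blast+
  moreover have "\<bar>x l\<bar> \<le> R \<and> \<bar>y l\<bar> \<le> R" if "l < k" "l \<noteq> i" for l
  proof -
    have "\<not> R < \<bar>x l\<bar>" "\<not> R < \<bar>y l\<bar>"
      using assms(3) i \<open>R < \<bar>y i\<bar>\<close> that by blast+
    then show ?thesis
      by linarith
  qed
  ultimately show ?thesis
    using that i by blast
qed

text \<open>The exception is the real line, whose box exterior has two components.\<close>
lemma box_exterior_polygon_exists:
  assumes "0 < R" and x: "x \<in> box_exterior k R" and y: "y \<in> box_exterior k R"
    and not_split: "\<not> (k = 1 \<and> x 0 * y 0 < 0)"
  shows "\<exists>x' y'. box_exterior_polygon k R (2 * eucl_dist k x y) x x' y' y"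
proof -
  have E_le: "eucl_dist k x y \<le> 2 * eucl_dist k x y"
    using eucl_dist_nonneg[of k x y] by simp
  show ?thesis
  proof (cases "\<exists>i j. i < k \<and> j < k \<and> i \<noteq> j \<and> R < \<bar>x i\<bar> \<and> R < \<bar>y j\<bar>")
    case True
    then obtain i j where "i < k" "j < k" "i \<noteq> j" "R < \<bar>x i\<bar>" "R < \<bar>y j\<bar>"
      by blast
    from box_exterior_polygon_distinct_faces[OF x y this]
    show ?thesis
      by (blast intro: box_exterior_polygon_mono[OF _ E_le])
  next
    case False
    then obtain i where i: "i < k" "R < \<bar>x i\<bar>" and y_i: "R < \<bar>y i\<bar>"
      and small: "\<And>l. l < k \<Longrightarrow> l \<noteq> i \<Longrightarrow> \<bar>x l\<bar> \<le> R \<and> \<bar>y l\<bar> \<le> R"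
      using box_exterior_single_large_coord[OF x y] by blast
    show ?thesis
    proof (cases "beyond_same_face k R x y")
      case True
      then show ?thesis
        using box_exterior_polygon_same_face[OF x y]
        by (blast intro: box_exterior_polygon_mono[OF _ E_le])
    next
      case False
      then have opposite: "(R < x i \<and> y i < -R) \<or> (x i < -R \<and> R < y i)"
        using i y_i by (auto simp: beyond_same_face_def abs_less_iff)
      then have "2 * R < eucl_dist k x y"
        using abs_coord_diff_le_eucl_dist[OF i(1), of x y] by auto
      show ?thesis
      proof (cases "\<exists>l<k. l \<noteq> i")
        case True
        then obtain l where "l < k" "l \<noteq> i" by blast
        with box_exterior_polygon_opposite_faces[OF x y \<open>0 < R\<close> i y_i \<open>2 * R < eucl_dist k x y\<close>]
        show ?thesis
          using small by blast
      next
        case False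
        then have "0 < k \<Longrightarrow> 0 = i" "1 < k \<Longrightarrow> 1 = i"
          by blast+
        then have "k = 1" "i = 0"
          using i(1) by linarith+
        moreover have "x i * y i < 0"
          using opposite \<open>0 < R\<close> by (auto simp: mult_pos_neg mult_neg_pos)
        ultimately show ?thesis
          using not_split by simp
      qed
    qed
  qed
qed

definition eucl_lipschitz_on ::
    "nat \<Rightarrow> real \<Rightarrow> (nat \<Rightarrow> real) set \<Rightarrow> ((nat \<Rightarrow> real) \<Rightarrow> 'a::metric_space) \<Rightarrow> bool"
  where "eucl_lipschitz_on k L S f \<longleftrightarrow> (\<forall>u\<in>S. \<forall>v\<in>S. dist (f u) (f v) \<le> L * eucl_dist k u v)"

text \<open>The segment from u to v traversed during the (c+1)-st third of [0,1], as a piece of a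
  three-segment path.\<close>
lemma lipschitz_on_image_coord_linepath:
  assumes f: "eucl_lipschitz_on k L (box_exterior k R) f" and "0 \<le> L"
    and uv: "u \<in> topspace (Euclidean_space k)" "v \<in> topspace (Euclidean_space k)"
      "beyond_same_face k R u v"
    and d: "eucl_dist k u v \<le> d"
  shows "(3 * L * d)-lipschitz_on {c/3..(c+1)/3} (\<lambda>t. f (coord_linepath u v (3 * t - c)))"
proof (rule lipschitz_onI)
  fix s t assume "s \<in> {c/3..(c+1)/3}" "t \<in> {c/3..(c+1)/3}"
  then have "3 * s - c \<in> {0..1}" "3 * t - c \<in> {0..1}" by auto
  then have "dist (f (coord_linepath u v (3 * s - c))) (f (coord_linepath u v (3 * t - c)))
      \<le> L * eucl_dist k (coord_linepath u v (3 * s - c)) (coord_linepath u v (3 * t - c))"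
    using f coord_linepath_in_box_exterior[OF uv] by (simp add: eucl_lipschitz_on_def)
  also have "\<dots> = L * (3 * \<bar>s - t\<bar> * eucl_dist k u v)"
    by (simp add: eucl_dist_coord_linepath abs_if)
  also have "\<dots> \<le> L * (3 * \<bar>s - t\<bar> * d)"
    using d \<open>0 \<le> L\<close> by (simp add: mult_left_mono)
  finally show "dist (f (coord_linepath u v (3 * s - c))) (f (coord_linepath u v (3 * t - c)))
      \<le> 3 * L * d * dist s t"
    by (simp add: dist_real_def mult_ac)
next
  show "0 \<le> 3 * L * d"
    using d \<open>0 \<le> L\<close> eucl_dist_nonneg[of k u v] by simp
qed

lemma lipschitz_path_along_box_exterior_polygon:
  assumes f: "eucl_lipschitz_on k L (box_exterior k R) f" "0 \<le> L"
    and "box_exterior_polygon k R d x x' y' y"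
  shows "\<exists>\<gamma>. (3 * L * d)-lipschitz_on {0..1::real} \<gamma> \<and> \<gamma> 0 = f x \<and> \<gamma> 1 = f y \<and>
    \<gamma> ` {0..1} \<subseteq> f ` box_exterior k R"
proof -
  note polygon = assms(3)[unfolded box_exterior_polygon_def insert_subset]
  define P where "P u v c t = f (coord_linepath u v (3 * t - c))" for u v c and t :: real
  have P_lipschitz: "(3 * L * d)-lipschitz_on {c/3..(c+1)/3} (P u v c)"
    if "u \<in> topspace (Euclidean_space k)" "v \<in> topspace (Euclidean_space k)"
      "beyond_same_face k R u v" "eucl_dist k u v \<le> d" for u v c
    unfolding P_def using lipschitz_on_image_coord_linepath[OF f that] .
  have P_image: "P u v c t \<in> f ` box_exterior k R"
    if "u \<in> topspace (Euclidean_space k)" "v \<in> topspace (Euclidean_space k)"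
      "beyond_same_face k R u v" "t \<in> {c/3..(c+1)/3}" for u v c t
    using that coord_linepath_in_box_exterior[of u k v R "3 * t - c"] by (auto simp: P_def)
  define \<gamma> where
    "\<gamma> t = (if t \<le> 2/3 then if t \<le> 1/3 then P x x' 0 t else P x' y' 1 t else P y' y 2 t)" for t
  have "(3 * L * d)-lipschitz_on {0..2/3} (\<lambda>t. if t \<le> 1/3 then P x x' 0 t else P x' y' 1 t)"
    using P_lipschitz[where u=x and v=x' and c=0] P_lipschitz[where u=x' and v=y' and c=1] polygon
    by (intro lipschitz_on_concat) (simp_all add: P_def)
  from lipschitz_on_concat[OF this P_lipschitz[where u=y' and v=y and c=2]]
  have "(3 * L * d)-lipschitz_on {0..1} \<gamma>"
    using polygon unfolding \<gamma>_def by (simp add: P_def)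
  moreover have "\<gamma> ` {0..1} \<subseteq> f ` box_exterior k R"
    using P_image[where u=x and v=x' and c=0] P_image[where u=x' and v=y' and c=1]
      P_image[where u=y' and v=y and c=2] polygon
    by (auto simp: \<gamma>_def)
  moreover have "\<gamma> 0 = f x" "\<gamma> 1 = f y"
    by (simp_all add: \<gamma>_def P_def)
  ultimately show ?thesis
    by blast
qed

lemma lipschitz_on_coord:
  assumes "\<And>p q. p \<in> Y \<Longrightarrow> q \<in> Y \<Longrightarrow> eucl_dist k (g p) (g q) \<le> L * dist p q"
    and "0 \<le> L" and "i < k"
  shows "L-lipschitz_on Y (\<lambda>p. g p i)"
proof (rule lipschitz_onI)
  fix p q assume "p \<in> Y" "q \<in> Y"
  then show "dist (g p i) (g q i) \<le> L * dist p q"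
    using assms(1)[of p q] abs_coord_diff_le_eucl_dist[OF \<open>i < k\<close>, of "g p" "g q"]
    by (simp add: dist_real_def)
qed (rule \<open>0 \<le> L\<close>)

lemma box_exterior_1_same_side:
  assumes "connected C" "continuous_on C (\<lambda>r. h r 0)" "h ` C \<subseteq> box_exterior 1 R" "0 \<le> R"
    and "p \<in> C" "q \<in> C"
  shows "\<not> h p 0 * h q 0 < 0"
proof
  assume opposite: "h p 0 * h q 0 < 0"
  have "connected ((\<lambda>r. h r 0) ` C)"
    using assms(2,1) by (rule connected_continuous_image)
  then have "{a..b} \<subseteq> (\<lambda>r. h r 0) ` C"
    if "a \<in> (\<lambda>r. h r 0) ` C" "b \<in> (\<lambda>r. h r 0) ` C" for a b
    using that by (rule connected_contains_Icc)
  from this[of "h p 0" "h q 0"] this[of "h q 0" "h p 0"]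
  have "0 \<in> (\<lambda>r. h r 0) ` C"
    using opposite \<open>p \<in> C\<close> \<open>q \<in> C\<close> by (auto simp: mult_less_0_iff)
  then obtain r where "0 = h r 0" "r \<in> C"
    by (rule imageE)
  with assms(3,4) show False
    by (auto simp: box_exterior_def)
qed

lemma inner_dist_component_le_lipschitz_path:
  assumes C: "C \<in> components Y" and \<gamma>: "M-lipschitz_on {0..1::real} \<gamma>"
    and "\<gamma> ` {0..1} \<subseteq> Y" and "\<gamma> 0 \<in> C"
  shows "inner_dist C (\<gamma> 0) (\<gamma> 1) \<le> ereal M"
proof (rule inner_dist_le_lipschitz_path[OF \<gamma>])
  show "\<gamma> ` {0..1} \<subseteq> C"
  proof (rule components_maximal[OF C])
    show "connected (\<gamma> ` {0..1})"
      by (intro connected_continuous_image lipschitz_on_continuous_on[OF \<gamma>] connected_Icc)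
    show "C \<inter> \<gamma> ` {0..1} \<noteq> {}"
      using \<open>\<gamma> 0 \<in> C\<close> by force
  qed (rule assms(3))
qed

lemma components_LNE_bilipschitz_box_exterior:
  assumes "0 < R" "0 \<le> L1" "0 \<le> L2"
    and f: "eucl_lipschitz_on k L1 (box_exterior k R) f" "f ` box_exterior k R \<subseteq> Y"
    and g: "\<And>p. p \<in> Y \<Longrightarrow> g p \<in> box_exterior k R \<and> f (g p) = p"
      "\<And>p q. p \<in> Y \<Longrightarrow> q \<in> Y \<Longrightarrow> eucl_dist k (g p) (g q) \<le> L2 * dist p q"
    and C: "C \<in> components Y"
  shows "LNE C"
proof -
  have CY: "C \<subseteq> Y"
    using C by (rule in_components_subset)
  have "inner_dist C p q \<le> ereal ((6 * L1 * L2 + 1) * norm (p - q))" if pq: "p \<in> C" "q \<in> C" for p q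
  proof -
    have "p \<in> Y" "q \<in> Y"
      using CY pq by auto
    then have ext: "g p \<in> box_exterior k R" "g q \<in> box_exterior k R"
      and inv: "f (g p) = p" "f (g q) = q"
      using g(1) by blast+
    have "\<not> (k = 1 \<and> g p 0 * g q 0 < 0)"
    proof
      assume "k = 1 \<and> g p 0 * g q 0 < 0"
      moreover have "continuous_on C (\<lambda>r. g r 0)" if "k = 1"
        using lipschitz_on_coord[of Y k g L2 0] g(2) \<open>0 \<le> L2\<close> CY that
        by (metis lipschitz_on_continuous_on continuous_on_subset zero_less_one)
      ultimately show False
        using box_exterior_1_same_side[OF in_components_connected[OF C], of g R p q] pq g(1) CY
          \<open>0 < R\<close> by fastforce
    qed
    then obtain x' y' where "box_exterior_polygon k R (2 * eucl_dist k (g p) (g q)) (g p) x' y' (g q)"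
      using box_exterior_polygon_exists[OF \<open>0 < R\<close> ext] by blast
    from lipschitz_path_along_box_exterior_polygon[OF f(1) \<open>0 \<le> L1\<close> this]
    obtain \<gamma> where \<gamma>: "(6 * L1 * eucl_dist k (g p) (g q))-lipschitz_on {0..1::real} \<gamma>"
      "\<gamma> 0 = p" "\<gamma> 1 = q" "\<gamma> ` {0..1} \<subseteq> f ` box_exterior k R"
      unfolding inv by (auto simp: mult_ac)
    have "inner_dist C p q \<le> ereal (6 * L1 * eucl_dist k (g p) (g q))"
      using inner_dist_component_le_lipschitz_path[OF C \<gamma>(1)] \<gamma>(4) f(2) pq
      unfolding \<gamma>(2,3) by blast
    also have "\<dots> \<le> ereal (6 * L1 * (L2 * norm (p - q)))"
    proof -
      have "eucl_dist k (g p) (g q) \<le> L2 * norm (p - q)"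
        using g(2) \<open>p \<in> Y\<close> \<open>q \<in> Y\<close> by (simp add: dist_norm)
      from mult_left_mono[OF this, of "6 * L1"] show ?thesis
        using \<open>0 \<le> L1\<close> by simp
    qed
    also have "\<dots> \<le> ereal ((6 * L1 * L2 + 1) * norm (p - q))"
      by (simp add: distrib_right)
    finally show ?thesis .
  qed
  moreover have "0 < 6 * L1 * L2 + 1"
    using assms(2,3) by (simp add: add_nonneg_pos)
  ultimately show ?thesis
    unfolding LNE_def by (intro exI[of _ "6 * L1 * L2 + 1"]) simp
qed

lemma compactin_Euclidean_space_subset_coord_box:
  assumes "compactin (Euclidean_space k) S"
  obtains R where "0 < R" "S \<subseteq> coord_box k R"
proof -
  have "compactin (powertop_real UNIV) S"
    using assms by (simp add: Euclidean_space_def compactin_subtopology)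
  then have "bounded ((\<lambda>z. z i) ` S)" for i
    by (metis compactin_euclidean_iff compact_imp_bounded image_compactin
        continuous_map_product_coordinates UNIV_I)
  then have "\<forall>i. \<exists>b. \<forall>z\<in>S. \<bar>z i\<bar> \<le> b"
    by (auto simp: bounded_iff)
  then obtain b where b: "\<And>z i. z \<in> S \<Longrightarrow> \<bar>z i\<bar> \<le> b i"
    by metis
  show ?thesis
  proof
    show "0 < 1 + (\<Sum>i<k. \<bar>b i\<bar>)"
      by (simp add: add_pos_nonneg sum_nonneg)
    have "\<bar>z i\<bar> \<le> 1 + (\<Sum>i<k. \<bar>b i\<bar>)" if "z \<in> S" "i < k" for z i
    proof -
      have "\<bar>b i\<bar> \<le> (\<Sum>i<k. \<bar>b i\<bar>)"
        using \<open>i < k\<close> by (intro member_le_sum) auto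
      with b[OF \<open>z \<in> S\<close>, of i] show ?thesis
        by linarith
    qed
    then show "S \<subseteq> coord_box k (1 + (\<Sum>i<k. \<bar>b i\<bar>))"
      using compactin_subset_topspace[OF assms] by (auto simp: coord_box_def)
  qed
qed

lemma bounded_image_eucl_lipschitz_on_coord_box:
  assumes f: "eucl_lipschitz_on k L S f" "0 \<le> L" and "S \<subseteq> coord_box k R"
  shows "bounded (f ` S)"
proof (cases "S = {}")
  case False
  then obtain z0 where z0: "z0 \<in> S" by blast
  have "f ` S \<subseteq> cball (f z0) (L * (\<Sum>i<k. 2 * R))"
  proof clarify
    fix z assume z: "z \<in> S"
    have "eucl_dist k z0 z \<le> (\<Sum>i<k. \<bar>z0 i - z i\<bar>)"
      unfolding eucl_dist_def by (rule L2_set_le_sum_abs)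
    also have "\<dots> \<le> (\<Sum>i<k. 2 * R)"
      using z0 z \<open>S \<subseteq> coord_box k R\<close>
      by (intro sum_mono) (smt (verit) coord_box_def lessThan_iff mem_Collect_eq subsetD)
    finally have "L * eucl_dist k z0 z \<le> L * (\<Sum>i<k. 2 * R)"
      using f(2) by (rule mult_left_mono)
    then show "f z \<in> cball (f z0) (L * (\<Sum>i<k. 2 * R))"
      using f(1) z0 z by (force simp: eucl_lipschitz_on_def)
  qed
  then show ?thesis
    using bounded_subset bounded_cball by blast
qed simp

locale lipschitz_chart_at_infinity =
  fixes X :: "'a::euclidean_space set" and k :: nat and K1 K2 :: "_ set"
    and f :: "(nat \<Rightarrow> real) \<Rightarrow> 'a" and g :: "'a \<Rightarrow> nat \<Rightarrow> real" and L1 L2 :: real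
  assumes compact_K1: "compactin (Euclidean_space k) K1" and compact_K2: "compact K2"
    and L1_pos: "L1 > 0" and L2_pos: "L2 > 0"
    and f_image: "f ` (topspace (Euclidean_space k) - K1) = X - K2"
    and g_image: "g ` (X - K2) = topspace (Euclidean_space k) - K1"
    and g_f: "\<forall>x\<in>topspace (Euclidean_space k) - K1. g (f x) = x"
    and f_g: "\<forall>y\<in>X - K2. f (g y) = y"
    and f_lipschitz: "\<forall>x\<in>topspace (Euclidean_space k) - K1. \<forall>x'\<in>topspace (Euclidean_space k) - K1.
          dist (f x) (f x') \<le> L1 * eucl_dist k x x'"
    and g_lipschitz: "\<forall>y\<in>X - K2. \<forall>y'\<in>X - K2. eucl_dist k (g y) (g y') \<le> L2 * dist y y'"

lemma lipschitz_regular_at_infinity_iff_chart: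
  "lipschitz_regular_at_infinity X \<longleftrightarrow>
    (\<exists>k K1 K2 f g L1 L2. lipschitz_chart_at_infinity X k K1 K2 f g L1 L2)"
  by (simp only: lipschitz_regular_at_infinity_def lipschitz_chart_at_infinity_def conj_assoc)

context lipschitz_chart_at_infinity
begin

definition core :: "real \<Rightarrow> 'a set" where
  "core R = closure (K2 \<union> f ` (coord_box k R - K1))"

context
  fixes R :: real
  assumes K1_in_box: "K1 \<subseteq> coord_box k R"
begin

lemma box_exterior_subset: "box_exterior k R \<subseteq> topspace (Euclidean_space k) - K1"
  using K1_in_box topspace_diff_box_exterior[of k R] by (auto simp: box_exterior_def)

lemma compact_core: "compact (core R)"
proof -
  have "bounded (f ` (coord_box k R - K1))"
    using f_lipschitz L1_pos
    by (intro bounded_image_eucl_lipschitz_on_coord_box[of k L1 _ f R])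
      (auto simp: eucl_lipschitz_on_def coord_box_def)
  then show ?thesis
    unfolding core_def using compact_K2 compact_imp_bounded
    by (auto intro!: compact_closure[THEN iffD2])
qed

lemma coord_gap_le_dist_image:
  assumes z: "z \<in> coord_box k R - K1" and w: "w \<in> topspace (Euclidean_space k) - K1"
    and "i < k"
  shows "\<bar>w i\<bar> - R \<le> L2 * dist (f z) (f w)"
proof -
  have "\<bar>w i\<bar> - R \<le> \<bar>z i - w i\<bar>"
    using z \<open>i < k\<close> by (force simp: coord_box_def)
  also have "\<dots> \<le> eucl_dist k (g (f z)) (g (f w))"
    using g_f z w abs_coord_diff_le_eucl_dist[OF \<open>i < k\<close>] by (simp add: coord_box_def)
  also have "\<dots> \<le> L2 * dist (f z) (f w)"
    using g_lipschitz f_image z w by (force simp: coord_box_def)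
  finally show ?thesis .
qed

lemma image_box_exterior_subset: "f ` box_exterior k R \<subseteq> X - core R"
proof (rule image_subsetI)
  fix w assume w: "w \<in> box_exterior k R"
  then obtain i where i: "i < k" "R < \<bar>w i\<bar>"
    by (auto simp: box_exterior_def)
  have w_dom: "w \<in> topspace (Euclidean_space k) - K1"
    using w box_exterior_subset by blast
  then have fw: "f w \<in> X - K2"
    using f_image by blast
  obtain e1 where e1: "0 < e1" "ball (f w) e1 \<subseteq> - K2"
    using fw compact_K2 compact_imp_closed open_contains_ball[of "- K2"] by blast
  define e where "e = min e1 ((\<bar>w i\<bar> - R) / L2)"
  have "0 < e"
    using e1 i L2_pos by (simp add: e_def)
  moreover have "\<not> dist y (f w) < e" if y: "y \<in> K2 \<union> f ` (coord_box k R - K1)" for y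
  proof
    assume close: "dist y (f w) < e"
    then have "y \<notin> K2"
      using e1 by (auto simp: e_def dist_commute)
    then obtain z where z: "z \<in> coord_box k R - K1" "y = f z"
      using y by blast
    have "\<bar>w i\<bar> - R \<le> L2 * dist (f z) (f w)"
      by (rule coord_gap_le_dist_image[OF z(1) w_dom i(1)])
    also have "\<dots> < L2 * e"
      using close z(2) L2_pos by simp
    also have "\<dots> \<le> \<bar>w i\<bar> - R"
      using L2_pos by (simp add: e_def min_def field_simps)
    finally show False by simp
  qed
  ultimately have "f w \<notin> core R"
    unfolding core_def closure_approachable by blast
  then show "f w \<in> X - core R"
    using fw by blast
qed

lemma inverse_outside_core:
  assumes p: "p \<in> X - core R"
  shows "g p \<in> box_exterior k R" and "f (g p) = p"
proof -
  have "K2 \<subseteq> core R" and image_box: "f ` (coord_box k R - K1) \<subseteq> core R"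
    unfolding core_def using closure_subset[of "K2 \<union> f ` (coord_box k R - K1)"] by blast+
  then have "p \<in> X - K2"
    using p by blast
  then have fgp: "f (g p) = p" and "g p \<in> topspace (Euclidean_space k) - K1"
    using f_g g_image by auto
  moreover have "g p \<notin> coord_box k R - K1"
    using image_box p fgp by (metis DiffD2 image_eqI subsetD)
  ultimately show "g p \<in> box_exterior k R" "f (g p) = p"
    by (auto simp flip: topspace_diff_box_exterior)
qed

lemma components_outside_core_LNE:
  assumes "0 < R" and "C \<in> components (X - core R)"
  shows "LNE C"
proof (rule components_LNE_bilipschitz_box_exterior[OF \<open>0 < R\<close> _ _ _ image_box_exterior_subset])
  show "eucl_lipschitz_on k L1 (box_exterior k R) f"
    using f_lipschitz box_exterior_subset by (auto simp: eucl_lipschitz_on_def)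
  show "eucl_dist k (g p) (g q) \<le> L2 * dist p q" if "p \<in> X - core R" "q \<in> X - core R" for p q
    using that g_lipschitz closure_subset by (auto simp: core_def)
  show "g p \<in> box_exterior k R \<and> f (g p) = p" if "p \<in> X - core R" for p
    using inverse_outside_core[OF that] by blast
qed (use L1_pos L2_pos assms(2) in simp_all)

end

end

theorem mainTheorem2:
  fixes X :: "'a::euclidean_space set"
  assumes "closed X" and "\<not> bounded X" and "lipschitz_regular_at_infinity X"
  shows "\<exists>K. compact K \<and> (\<forall>C\<in>components (X - K). LNE C)"
proof -
  obtain k K1 K2 f g L1 L2 where chart: "lipschitz_chart_at_infinity X k K1 K2 f g L1 L2"
    using assms(3) unfolding lipschitz_regular_at_infinity_iff_chart by blast
  interpret lipschitz_chart_at_infinity X k K1 K2 f g L1 L2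
    by (rule chart)
  obtain R where "0 < R" and box: "K1 \<subseteq> coord_box k R"
    using compactin_Euclidean_space_subset_coord_box[OF compact_K1] by blast
  show ?thesis
  proof (intro exI[of _ "core R"] conjI ballI)
    show "compact (core R)"
      using box by (rule compact_core)
    show "LNE C" if "C \<in> components (X - core R)" for C
      using box \<open>0 < R\<close> that by (rule components_outside_core_LNE)
  qed
qed

end
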